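(* Let $G$ be a DAG or MAG on $\{Y,X_1,\dots,X_d\}$ ($d\ge1$) whose skeleton is the path $Y - X_d - X_{d-1} - \cdots - X_1$, with arbitrary edge orientations. Then $N_G=d+1$.
   Context: For $A\subseteq\{1,\dots,d\}$, $\mathbf{X}_A:=\{X_i:i\in A\}$. $\perp_G$ is d-separation (m-separation for a MAG). For $S',S''\subseteq\{1,\dots,d\}$, $S'\sim_G S''$ iff there exists $S_\cap\subseteq S'\cap S''$ with $Y\perp_G\mathbf{X}_{(S'\cup S'')\setminus S_\cap}\mid\mathbf{X}_{S_\cap}$ (separation from the empty set holds trivially); this is an equivalence relation, and $N_G$ denotes the number of its equivalence classes on the power set of $\{1,\dots,d\}$. *)

theory Defs
  imports Main
begin

text \<open>Mixed graphs (covering DAGs and MAGs) are given by edge marks: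
  g a b = None if a and b are non-adjacent, otherwise g a b is the mark
  at the endpoint b of the edge between a and b (Tail or Arrow).
  So a \<rightarrow> b is g a b = Some Arrow, g b a = Some Tail;
  a \<leftrightarrow> b is both marks Arrow; a - b is both marks Tail.\<close>

datatype emark = Tail | Arrow

type_synonym 'v mgraph = "'v \<Rightarrow> 'v \<Rightarrow> emark option"

definition adj :: "'v mgraph \<Rightarrow> 'v \<Rightarrow> 'v \<Rightarrow> bool" where
  "adj g a b = (g a b \<noteq> None)"

definition dir_edges :: "'v mgraph \<Rightarrow> ('v \<times> 'v) set" where
  "dir_edges g = {(u, v). g u v = Some Arrow \<and> g v u = Some Tail}"

definition anc :: "'v mgraph \<Rightarrow> 'v \<Rightarrow> 'v \<Rightarrow> bool" where
  "anc g a b = ((a, b) \<in> (dir_edges g)\<^sup>*)"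

definition well_formed :: "'v set \<Rightarrow> 'v mgraph \<Rightarrow> bool" where
  "well_formed V g = ((\<forall>a b. g a b \<noteq> None \<longrightarrow> a \<in> V \<and> b \<in> V \<and> a \<noteq> b)
      \<and> (\<forall>a b. g a b = None \<longleftrightarrow> g b a = None))"

definition is_path :: "'v mgraph \<Rightarrow> 'v list \<Rightarrow> bool" where
  "is_path g xs = (xs \<noteq> [] \<and> distinct xs \<and>
      (\<forall>i. Suc i < length xs \<longrightarrow> adj g (xs ! i) (xs ! Suc i)))"

definition collider :: "'v mgraph \<Rightarrow> 'v list \<Rightarrow> nat \<Rightarrow> bool" where
  "collider g xs i = (0 < i \<and> Suc i < length xs \<and>
      g (xs ! (i - 1)) (xs ! i) = Some Arrow \<and> g (xs ! Suc i) (xs ! i) = Some Arrow)"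

definition m_connecting :: "'v mgraph \<Rightarrow> 'v set \<Rightarrow> 'v list \<Rightarrow> bool" where
  "m_connecting g Z xs = (is_path g xs \<and>
     (\<forall>i. 0 < i \<and> Suc i < length xs \<longrightarrow>
        (collider g xs i \<longrightarrow> (\<exists>z\<in>Z. anc g (xs ! i) z)) \<and>
        (\<not> collider g xs i \<longrightarrow> xs ! i \<notin> Z)))"

definition m_sep :: "'v mgraph \<Rightarrow> 'v set \<Rightarrow> 'v set \<Rightarrow> 'v set \<Rightarrow> bool" where
  "m_sep g A B Z = (\<not> (\<exists>xs. m_connecting g Z xs \<and> hd xs \<in> A \<and> last xs \<in> B))"

definition is_DAG :: "'v set \<Rightarrow> 'v mgraph \<Rightarrow> bool" where
  "is_DAG V g = (well_formed V g \<and>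
     (\<forall>a b. adj g a b \<longrightarrow> (a, b) \<in> dir_edges g \<or> (b, a) \<in> dir_edges g) \<and>
     acyclic (dir_edges g))"

definition ancestral :: "'v mgraph \<Rightarrow> bool" where
  "ancestral g = (acyclic (dir_edges g) \<and>
     (\<forall>a b. g a b = Some Arrow \<and> g b a = Some Arrow \<longrightarrow> \<not> anc g a b) \<and>
     (\<forall>a b. g a b = Some Tail \<and> g b a = Some Tail \<longrightarrow>
         (\<forall>c. g c a \<noteq> Some Arrow \<and> g c b \<noteq> Some Arrow)))"

definition maximal :: "'v set \<Rightarrow> 'v mgraph \<Rightarrow> bool" where
  "maximal V g = (\<forall>a\<in>V. \<forall>b\<in>V. a \<noteq> b \<and> \<not> adj g a b \<longrightarrow>
     (\<exists>Z \<subseteq> V - {a, b}. m_sep g {a} {b} Z))"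

definition is_MAG :: "'v set \<Rightarrow> 'v mgraph \<Rightarrow> bool" where
  "is_MAG V g = (well_formed V g \<and> ancestral g \<and> maximal V g)"

text \<open>Vertices: X_i = i for 1 \<le> i \<le> d, and Y = Suc d.
  Skeleton is the path Y - X_d - ... - X_1.\<close>
definition path_skeleton :: "nat \<Rightarrow> nat mgraph \<Rightarrow> bool" where
  "path_skeleton d g = (\<forall>a b. adj g a b \<longleftrightarrow>
     (a \<in> {1..Suc d} \<and> b \<in> {1..Suc d} \<and> (a = Suc b \<or> b = Suc a)))"

definition sim_G :: "nat mgraph \<Rightarrow> nat \<Rightarrow> nat set \<Rightarrow> nat set \<Rightarrow> bool" where
  "sim_G g d S1 S2 = (\<exists>Sc \<subseteq> S1 \<inter> S2. m_sep g {Suc d} ((S1 \<union> S2) - Sc) Sc)"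

definition N_G :: "nat mgraph \<Rightarrow> nat \<Rightarrow> nat" where
  "N_G g d = card (Pow {1..d} // {(S1, S2). S1 \<subseteq> {1..d} \<and> S2 \<subseteq> {1..d} \<and> sim_G g d S1 S2})"

end

theory Submission
  imports Defs
begin

text \<open>On a path skeleton the only path from \<open>Y\<close> to \<open>X\<^sub>a\<close> is the descending path
  \<open>Y, X\<^sub>d, \<dots>, X\<^sub>a\<close>, and a collider \<open>X\<^sub>i\<close> on it has no proper descendant. Hence
  \<open>Y\<close> is m-separated from \<open>X\<^sub>a\<close> by \<open>C\<close> iff some \<open>i > a\<close> has \<open>X\<^sub>i \<in> C\<close> exactly when
  \<open>X\<^sub>i\<close> is a non-collider, i.e. iff \<open>a\<close> lies below the topmost index at which \<open>C\<close>
  disagrees with the set of colliders. Two sets are equivalent iff they have the same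
  topmost disagreement, which takes each of the \<open>d + 1\<close> values \<open>0, \<dots>, d\<close>.\<close>

definition top_mismatch :: "(nat \<Rightarrow> bool) \<Rightarrow> nat \<Rightarrow> nat set \<Rightarrow> nat" where
  "top_mismatch c d S = Max ({0} \<union> {i \<in> {1..d}. (i \<in> S) \<noteq> c i})"

lemma top_mismatch_le: "top_mismatch c d S \<le> d"
  unfolding top_mismatch_def by (auto intro: Max.boundedI)

lemma mismatch_le_top_mismatch:
  "i \<in> {1..d} \<Longrightarrow> (i \<in> S) \<noteq> c i \<Longrightarrow> i \<le> top_mismatch c d S"
  unfolding top_mismatch_def by (rule Max_ge) auto

lemma top_mismatch_cases:
  "top_mismatch c d S = 0 \<or>
     top_mismatch c d S \<in> {1..d} \<and> (top_mismatch c d S \<in> S) \<noteq> c (top_mismatch c d S)"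
proof -
  have "Max ({0} \<union> {i \<in> {1..d}. (i \<in> S) \<noteq> c i}) \<in> {0} \<union> {i \<in> {1..d}. (i \<in> S) \<noteq> c i}"
    by (rule Max_in) auto
  then show ?thesis unfolding top_mismatch_def by blast
qed

lemma agree_above_top_mismatch:
  "top_mismatch c d S < i \<Longrightarrow> i \<le> d \<Longrightarrow> (i \<in> S) = c i"
  using mismatch_le_top_mismatch[of i d S c] by fastforce

lemma less_top_mismatch_iff:
  "a < top_mismatch c d S \<longleftrightarrow> (\<exists>i. a < i \<and> i \<le> d \<and> (i \<in> S) \<noteq> c i)"
proof
  assume "a < top_mismatch c d S"
  then show "\<exists>i. a < i \<and> i \<le> d \<and> (i \<in> S) \<noteq> c i"
    using top_mismatch_cases[of c d S] by auto
next
  assume "\<exists>i. a < i \<and> i \<le> d \<and> (i \<in> S) \<noteq> c i"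
  then obtain i where "a < i" "i \<in> {1..d}" "(i \<in> S) \<noteq> c i" by auto
  then show "a < top_mismatch c d S"
    using mismatch_le_top_mismatch[of i d S c] by simp
qed

lemma top_mismatch_cong:
  assumes agree: "\<And>i. top_mismatch c d C \<le> i \<Longrightarrow> (i \<in> S) = (i \<in> C)"
  shows "top_mismatch c d S = top_mismatch c d C"
proof (rule antisym)
  show "top_mismatch c d S \<le> top_mismatch c d C"
  proof (rule ccontr)
    assume "\<not> ?thesis"
    then obtain i where "top_mismatch c d C < i" "i \<le> d" "(i \<in> S) \<noteq> c i"
      using less_top_mismatch_iff[of "top_mismatch c d C" c d S] by auto
    then show False using agree agree_above_top_mismatch[of c d C i] by simp
  qed
  show "top_mismatch c d C \<le> top_mismatch c d S"
    using top_mismatch_cases[of c d C] agree[of "top_mismatch c d C"]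
    by (auto intro: mismatch_le_top_mismatch)
qed

lemma top_mismatch_attains:
  assumes "v \<le> d"
  shows "top_mismatch c d {i \<in> {1..d}. c i \<noteq> (i = v)} = v"
    (is "top_mismatch c d ?S = v")
proof (rule antisym)
  show "top_mismatch c d ?S \<le> v"
    using top_mismatch_cases[of c d ?S] by auto
  show "v \<le> top_mismatch c d ?S"
    using assms by (cases "v = 0") (auto intro: mismatch_le_top_mismatch)
qed

lemma top_mismatch_image: "top_mismatch c d ` Pow {1..d} = {0..d}"
proof
  show "top_mismatch c d ` Pow {1..d} \<subseteq> {0..d}"
    using top_mismatch_le by auto
  show "{0..d} \<subseteq> top_mismatch c d ` Pow {1..d}"
  proof
    fix v assume "v \<in> {0..d}"
    then have "v = top_mismatch c d {i \<in> {1..d}. c i \<noteq> (i = v)}"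
      using top_mismatch_attains by simp
    then show "v \<in> top_mismatch c d ` Pow {1..d}" by blast
  qed
qed

lemma top_mismatch_eq_agree:
  assumes "top_mismatch c d S1 = top_mismatch c d S2" "a \<in> {1..d}" "top_mismatch c d S1 \<le> a"
  shows "(a \<in> S1) = (a \<in> S2)"
proof (cases "top_mismatch c d S1 = a")
  case True
  then show ?thesis using assms top_mismatch_cases[of c d S1] top_mismatch_cases[of c d S2] by auto
next
  case False
  then show ?thesis
    using assms agree_above_top_mismatch[of c d S1 a] agree_above_top_mismatch[of c d S2 a] by auto
qed

lemma common_part_iff_top_mismatch_eq:
  assumes "S1 \<subseteq> {1..d}" "S2 \<subseteq> {1..d}"
  shows "(\<exists>C \<subseteq> S1 \<inter> S2. \<forall>a \<in> (S1 \<union> S2) - C. a < top_mismatch c d C)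
     \<longleftrightarrow> top_mismatch c d S1 = top_mismatch c d S2"
proof
  assume "\<exists>C \<subseteq> S1 \<inter> S2. \<forall>a \<in> (S1 \<union> S2) - C. a < top_mismatch c d C"
  then obtain C where "C \<subseteq> S1 \<inter> S2" and "\<forall>a \<in> (S1 \<union> S2) - C. a < top_mismatch c d C"
    by blast
  then have "top_mismatch c d S = top_mismatch c d C" if "S \<subseteq> S1 \<union> S2" "C \<subseteq> S" for S
    using that by (intro top_mismatch_cong) (auto simp: not_less[symmetric])
  then show "top_mismatch c d S1 = top_mismatch c d S2"
    using \<open>C \<subseteq> S1 \<inter> S2\<close> by (metis Un_upper1 Un_upper2 le_inf_iff)
next
  assume eq: "top_mismatch c d S1 = top_mismatch c d S2"
  have agree: "(a \<in> S1) = (a \<in> S2)" if "a \<in> {1..d}" "top_mismatch c d S1 \<le> a" for a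
    using top_mismatch_eq_agree[OF eq that] .
  then have "top_mismatch c d (S1 \<inter> S2) = top_mismatch c d S1"
    using assms by (intro top_mismatch_cong) auto
  then have "\<forall>a \<in> (S1 \<union> S2) - S1 \<inter> S2. a < top_mismatch c d (S1 \<inter> S2)"
    using agree assms by (auto simp: not_le[symmetric])
  then show "\<exists>C \<subseteq> S1 \<inter> S2. \<forall>a \<in> (S1 \<union> S2) - C. a < top_mismatch c d C"
    by blast
qed

lemma card_quotient_kernel:
  "card (A // {(x, y). x \<in> A \<and> y \<in> A \<and> f x = f y}) = card (f ` A)"
proof -
  have "{(x, y). x \<in> A \<and> y \<in> A \<and> f x = f y} `` {x} = {y \<in> A. f y = f x}" if "x \<in> A" for x
    using that by auto
  then have "A // {(x, y). x \<in> A \<and> y \<in> A \<and> f x = f y} = (\<lambda>v. {y \<in> A. f y = v}) ` f ` A"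
    unfolding quotient_def by (auto intro!: image_eqI)
  moreover have "inj_on (\<lambda>v. {y \<in> A. f y = v}) (f ` A)"
    by (rule inj_onI) auto
  ultimately show ?thesis by (simp add: card_image)
qed

definition collider_at :: "nat mgraph \<Rightarrow> nat \<Rightarrow> bool" where
  "collider_at g i = (g (Suc i) i = Some Arrow \<and> g (i - 1) i = Some Arrow)"

locale path_skeleton_graph =
  fixes d :: nat and g :: "nat mgraph"
  assumes skeleton: "path_skeleton d g"
begin

lemma adj_iff: "adj g a b \<longleftrightarrow> a \<in> {1..Suc d} \<and> b \<in> {1..Suc d} \<and> (a = Suc b \<or> b = Suc a)"
  using skeleton unfolding path_skeleton_def by blast

lemma anc_from_collider_eq: assumes "collider_at g i" "anc g i z" shows "z = i"
  using \<open>anc g i z\<close> unfolding anc_def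
proof (rule converse_rtranclE)
  show "i = z \<Longrightarrow> z = i" by simp
next
  fix y assume "(i, y) \<in> dir_edges g"
  then have edge: "g i y = Some Arrow" "g y i = Some Tail" by (auto simp: dir_edges_def)
  then have "y = Suc i \<or> i = Suc y" using adj_iff by (auto simp: adj_def)
  then show ?thesis using edge \<open>collider_at g i\<close> by (auto simp: collider_at_def)
qed

definition descent :: "nat \<Rightarrow> nat list" where
  "descent a = rev [a..<Suc (Suc d)]"

lemma length_descent: "length (descent a) = Suc (Suc d) - a"
  by (simp add: descent_def del: upt_Suc)

lemma nth_descent: "j < length (descent a) \<Longrightarrow> descent a ! j = Suc d - j"
  by (simp add: descent_def rev_nth del: upt_Suc)

lemma descent_ends: "a \<le> Suc d \<Longrightarrow> hd (descent a) = Suc d \<and> last (descent a) = a"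
  by (simp add: descent_def hd_rev last_rev del: upt_Suc)

lemma is_path_descent:
  assumes "a \<in> {1..Suc d}"
  shows "is_path g (descent a)"
  unfolding is_path_def
proof (intro conjI allI impI)
  show "descent a \<noteq> []" "distinct (descent a)"
    using assms by (simp_all add: descent_def del: upt_Suc)
  fix i assume "Suc i < length (descent a)"
  then show "adj g (descent a ! i) (descent a ! Suc i)"
    using assms by (auto simp: adj_iff nth_descent length_descent)
qed

lemma path_from_top_nth:
  assumes path: "is_path g xs" and hd: "hd xs = Suc d"
  shows "j < length xs \<Longrightarrow> xs ! j = Suc d - j"
proof (induction j rule: less_induct)
  case (less j)
  show ?case
  proof (cases j)
    case 0
    then show ?thesis using hd less.prems by (simp add: hd_conv_nth)
  next
    case (Suc k)
    then have prev: "xs ! k = Suc d - k" using less by simp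
    have "adj g (xs ! k) (xs ! j)" using path less.prems Suc by (simp add: is_path_def)
    then have range: "xs ! k \<in> {1..Suc d}" "xs ! j \<in> {1..Suc d}"
      and step: "xs ! j = xs ! k - 1 \<or> xs ! j = Suc (xs ! k)"
      using adj_iff by auto
    have "xs ! j \<noteq> Suc (xs ! k)"
    proof (cases k)
      case 0
      then show ?thesis using range prev by auto
    next
      case (Suc p)
      \<comment> \<open>going back up would revisit the vertex \<open>xs ! p\<close>\<close>
      have "xs ! p = Suc d - p" using less Suc \<open>j = Suc k\<close> by simp
      then have "xs ! p = Suc (xs ! k)" using prev range Suc by simp arith
      moreover have "xs ! p \<noteq> xs ! j"
        using path less.prems Suc \<open>j = Suc k\<close> by (simp add: is_path_def nth_eq_iff_index_eq)
      ultimately show ?thesis by simp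
    qed
    then show ?thesis using step prev Suc by auto
  qed
qed

lemma path_from_top_eq_descent:
  assumes path: "is_path g xs" and "hd xs = Suc d" "last xs = a" "1 \<le> a"
  shows "xs = descent a"
proof -
  have nth: "\<And>j. j < length xs \<Longrightarrow> xs ! j = Suc d - j"
    using path_from_top_nth[OF path \<open>hd xs = Suc d\<close>] .
  have "xs \<noteq> []" using path by (simp add: is_path_def)
  then have "a = Suc d - (length xs - 1)" using nth \<open>last xs = a\<close> by (simp add: last_conv_nth)
  then have "length xs = length (descent a)" using \<open>1 \<le> a\<close> \<open>xs \<noteq> []\<close> by (simp add: length_descent)
  then show ?thesis using nth nth_descent by (auto intro: nth_equalityI)
qed

lemma m_connecting_descent_iff:
  assumes "a \<in> {1..Suc d}"
  shows "m_connecting g C (descent a) \<longleftrightarrow> (\<forall>i. a < i \<and> i \<le> d \<longrightarrow> (i \<in> C \<longleftrightarrow> collider_at g i))"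
proof -
  have collider: "collider g (descent a) j \<longleftrightarrow> collider_at g (Suc d - j)"
    if "0 < j" "Suc j < length (descent a)" for j
  proof -
    have "j \<le> d" using that assms by (simp add: length_descent)
    then have "descent a ! (j - 1) = Suc (Suc d - j)" "descent a ! Suc j = Suc d - j - 1"
        "descent a ! j = Suc d - j"
      using that nth_descent by (auto simp: Suc_diff_le)
    then show ?thesis using that by (simp add: collider_def collider_at_def)
  qed
  have at_vertex: "descent a ! (Suc d - i) = i \<and> collider g (descent a) (Suc d - i) = collider_at g i"
    if "a < i" "i \<le> d" for i
    using that collider[of "Suc d - i"] nth_descent[of "Suc d - i" a] by (auto simp: length_descent)
  have reindex: "(\<forall>j. 0 < j \<and> Suc j < length (descent a) \<longrightarrow> P j)
      \<longleftrightarrow> (\<forall>i. a < i \<and> i \<le> d \<longrightarrow> P (Suc d - i))" for P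
  proof
    assume "\<forall>j. 0 < j \<and> Suc j < length (descent a) \<longrightarrow> P j"
    then show "\<forall>i. a < i \<and> i \<le> d \<longrightarrow> P (Suc d - i)" by (auto simp: length_descent)
  next
    assume vertices: "\<forall>i. a < i \<and> i \<le> d \<longrightarrow> P (Suc d - i)"
    show "\<forall>j. 0 < j \<and> Suc j < length (descent a) \<longrightarrow> P j"
    proof (intro allI impI)
      fix j assume "0 < j \<and> Suc j < length (descent a)"
      then have "a < Suc d - j" "Suc d - j \<le> d" "Suc d - (Suc d - j) = j"
        using assms by (auto simp: length_descent)
      then show "P j" using vertices by metis
    qed
  qed
  have anc: "(\<exists>z\<in>C. anc g i z) \<longleftrightarrow> i \<in> C" if "collider_at g i" for i
    using anc_from_collider_eq[OF that] by (auto simp: anc_def)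
  show ?thesis
    unfolding m_connecting_def reindex using is_path_descent[OF assms] at_vertex anc by auto
qed

lemma m_sep_from_top_iff:
  assumes "A \<subseteq> {1..d}"
  shows "m_sep g {Suc d} A C \<longleftrightarrow> (\<forall>a\<in>A. \<exists>i. a < i \<and> i \<le> d \<and> (i \<in> C) \<noteq> collider_at g i)"
proof -
  have "(\<exists>xs. m_connecting g C xs \<and> hd xs \<in> {Suc d} \<and> last xs \<in> A)
      \<longleftrightarrow> (\<exists>a\<in>A. m_connecting g C (descent a))"
  proof
    assume "\<exists>xs. m_connecting g C xs \<and> hd xs \<in> {Suc d} \<and> last xs \<in> A"
    then obtain xs where xs: "m_connecting g C xs" "hd xs = Suc d" "last xs \<in> A" by auto
    then have "xs = descent (last xs)"
      using assms by (intro path_from_top_eq_descent) (auto simp: m_connecting_def)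
    then show "\<exists>a\<in>A. m_connecting g C (descent a)" using xs by metis
  next
    assume "\<exists>a\<in>A. m_connecting g C (descent a)"
    then obtain a where "a \<in> A" "m_connecting g C (descent a)" by blast
    moreover have "hd (descent a) = Suc d \<and> last (descent a) = a"
      using \<open>a \<in> A\<close> assms by (intro descent_ends) auto
    ultimately show "\<exists>xs. m_connecting g C xs \<and> hd xs \<in> {Suc d} \<and> last xs \<in> A" by auto
  qed
  moreover have "a \<in> A \<Longrightarrow> a \<in> {1..Suc d}" for a using assms by auto
  ultimately show ?thesis
    unfolding m_sep_def using m_connecting_descent_iff by auto
qed

lemma sim_G_iff_top_mismatch_eq:
  assumes "S1 \<subseteq> {1..d}" "S2 \<subseteq> {1..d}"
  shows "sim_G g d S1 S2 \<longleftrightarrow> top_mismatch (collider_at g) d S1 = top_mismatch (collider_at g) d S2"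
proof -
  have "sim_G g d S1 S2 \<longleftrightarrow>
      (\<exists>C \<subseteq> S1 \<inter> S2. \<forall>a \<in> (S1 \<union> S2) - C. a < top_mismatch (collider_at g) d C)"
    unfolding sim_G_def less_top_mismatch_iff
    using assms by (intro ex_cong1 conj_cong refl m_sep_from_top_iff) auto
  then show ?thesis using common_part_iff_top_mismatch_eq[OF assms] by simp
qed

end

theorem mainTheorem9:
  fixes d :: nat and g :: "nat mgraph"
  assumes "d \<ge> 1"
    and "is_DAG {1..Suc d} g \<or> is_MAG {1..Suc d} g"
    and "path_skeleton d g"
  shows "N_G g d = d + 1"
proof -
  interpret path_skeleton_graph d g using assms(3) by unfold_locales
  let ?k = "top_mismatch (collider_at g) d"
  have "{(S1, S2). S1 \<subseteq> {1..d} \<and> S2 \<subseteq> {1..d} \<and> sim_G g d S1 S2}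
      = {(x, y). x \<in> Pow {1..d} \<and> y \<in> Pow {1..d} \<and> ?k x = ?k y}"
    using sim_G_iff_top_mismatch_eq by blast
  then have "N_G g d = card (Pow {1..d} // {(x, y). x \<in> Pow {1..d} \<and> y \<in> Pow {1..d} \<and> ?k x = ?k y})"
    unfolding N_G_def by simp
  also have "\<dots> = card (?k ` Pow {1..d})" by (rule card_quotient_kernel)
  also have "\<dots> = d + 1" unfolding top_mismatch_image by simp
  finally show ?thesis .
qed

end
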